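(* Let $M\ge 2N-1$. For a generic $N$-dimensional subspace $W\subset\mathbb R^M$ (i.e. all $W$ in a Zariski open dense subset of the Grassmannian $Gr(N,M)$) the following holds: for every $S\subset\{1,\dots,M\}$ and every $u\in W$, one has $\sigma_S(u)\in W$ if and only if $\sigma_S(u)=\pm u$.
   Context: For $S\subset\{1,\dots,M\}$ with characteristic function $S(i)$ ($S(i)=1$ if $i\in S$, $0$ otherwise), $\sigma_S:\mathbb R^M\to\mathbb R^M$ is $\sigma_S(a_1,\dots,a_M)=((-1)^{S(1)}a_1,\dots,(-1)^{S(M)}a_M)$. *)

theory Defs
  imports "HOL-Analysis.Analysis"
begin

inductive matrix_poly_fun :: "(real^'n^'m \<Rightarrow> real) \<Rightarrow> bool" where
  const: "matrix_poly_fun (\<lambda>A. c)"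
| coord: "matrix_poly_fun (\<lambda>A. A $ i $ j)"
| add: "matrix_poly_fun p \<Longrightarrow> matrix_poly_fun q \<Longrightarrow> matrix_poly_fun (\<lambda>A. p A + q A)"
| mult: "matrix_poly_fun p \<Longrightarrow> matrix_poly_fun q \<Longrightarrow> matrix_poly_fun (\<lambda>A. p A * q A)"

definition sigma :: "'m set \<Rightarrow> real^'m \<Rightarrow> real^'m" where
  "sigma S u = (\<chi> i. if i \<in> S then - (u $ i) else u $ i)"

end

theory Submission
  imports Defs "HOL-Computational_Algebra.Polynomial"
begin

text \<open>Take for W the column space of an M x N matrix A whose N x N minors are all nonzero, a
  condition cut out by the nonvanishing of their product, a polynomial in the entries of A which
  is nonzero at a Vandermonde matrix. Any N rows of such an A are independent, so a vector of W
  with N zero coordinates is zero. If u and sigma S u both lie in W, then sigma S u + u vanishes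
  on S and sigma S u - u on its complement; as M \<ge> 2N - 1, one of these two sets has at least
  N elements, whence sigma S u = -u or sigma S u = u.\<close>

lemma matrix_poly_fun_sum:
  assumes "finite I" "\<And>k. k \<in> I \<Longrightarrow> matrix_poly_fun (f k)"
  shows "matrix_poly_fun (\<lambda>A. \<Sum>k\<in>I. f k A)"
  using assms
proof (induction I rule: finite_induct)
  case empty
  then show ?case using matrix_poly_fun.const[of 0] by simp
next
  case (insert x F)
  then show ?case by (simp add: matrix_poly_fun.add)
qed

lemma matrix_poly_fun_prod:
  assumes "finite I" "\<And>k. k \<in> I \<Longrightarrow> matrix_poly_fun (f k)"
  shows "matrix_poly_fun (\<lambda>A. \<Prod>k\<in>I. f k A)"
  using assms
proof (induction I rule: finite_induct)
  case empty
  then show ?case using matrix_poly_fun.const[of 1] by simp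
next
  case (insert x F)
  then show ?case by (simp add: matrix_poly_fun.mult)
qed

definition row_submatrix :: "'a^'n^'m \<Rightarrow> ('k \<Rightarrow> 'm) \<Rightarrow> 'a^'n^'k" where
  "row_submatrix A r = (\<chi> i j. A $ r i $ j)"

definition rows_in_general_position :: "real^'n::finite^'m \<Rightarrow> bool" where
  "rows_in_general_position A \<longleftrightarrow> (\<forall>r :: 'n \<Rightarrow> 'm. inj r \<longrightarrow> det (row_submatrix A r) \<noteq> 0)"

definition maximal_minors_prod :: "real^'n::finite^'m::finite \<Rightarrow> real" where
  "maximal_minors_prod A = (\<Prod>r \<in> {r :: 'n \<Rightarrow> 'm. inj r}. det (row_submatrix A r))"

lemma matrix_poly_fun_det_row_submatrix:
  "matrix_poly_fun (\<lambda>A :: real^'n::finite^'m. det (row_submatrix A (r :: 'n \<Rightarrow> 'm)))"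
proof -
  have expand: "(\<lambda>A :: real^'n^'m. det (row_submatrix A r)) =
      (\<lambda>A. \<Sum>p\<in>{p. p permutes (UNIV::'n set)}. of_int (sign p) * (\<Prod>i\<in>UNIV. A $ r i $ p i))"
    by (simp add: det_def row_submatrix_def)
  show ?thesis unfolding expand
    by (intro matrix_poly_fun_sum matrix_poly_fun_prod matrix_poly_fun.mult
        matrix_poly_fun.const matrix_poly_fun.coord) auto
qed

lemma matrix_poly_fun_maximal_minors_prod:
  "matrix_poly_fun (maximal_minors_prod :: real^'n::finite^'m::finite \<Rightarrow> real)"
  unfolding maximal_minors_prod_def[abs_def]
  by (intro matrix_poly_fun_prod matrix_poly_fun_det_row_submatrix) auto

lemma maximal_minors_prod_nonzero_iff:
  "maximal_minors_prod A \<noteq> 0 \<longleftrightarrow> rows_in_general_position A"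
  by (simp add: maximal_minors_prod_def rows_in_general_position_def)

lemma det_nonzero_iff_ker_trivial:
  fixes A :: "real^'n^'n"
  shows "det A \<noteq> 0 \<longleftrightarrow> (\<forall>x. A *v x = 0 \<longrightarrow> x = 0)"
  using det_eq_0_rank[of A] matrix_nonfull_linear_equations_eq[of A] rank_bound[of A]
  by fastforce

lemma rows_in_general_position_vanishing:
  fixes A :: "real^'n::finite^'m::finite"
  assumes "rows_in_general_position A" "CARD('n) \<le> card T" "\<forall>i\<in>T. (A *v z) $ i = 0"
  shows "z = 0"
proof -
  obtain r :: "'n \<Rightarrow> 'm" where r: "range r \<subseteq> T" "inj r"
    using card_le_inj[of "UNIV :: 'n set" T] assms(2) by auto
  have "row_submatrix A r *v z = 0"
    using r(1) assms(3) by (auto simp: vec_eq_iff row_submatrix_def matrix_vector_mult_def)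
  moreover have "det (row_submatrix A r) \<noteq> 0"
    using assms(1) r(2) by (simp add: rows_in_general_position_def)
  ultimately show "z = 0" by (simp add: det_nonzero_iff_ker_trivial)
qed

lemma rows_in_general_position_rank:
  fixes A :: "real^'n::finite^'m::finite"
  assumes "rows_in_general_position A" "CARD('n) \<le> CARD('m)"
  shows "rank A = CARD('n)"
proof -
  have "z = 0" if "A *v z = 0" for z
    using rows_in_general_position_vanishing[OF assms(1), of UNIV z] assms(2) that by simp
  then show ?thesis using matrix_nonfull_linear_equations_eq[of A] by blast
qed

lemma det_vandermonde_nonzero:
  fixes t :: "'n::finite \<Rightarrow> real" and e :: "'n \<Rightarrow> nat"
  assumes "inj t" "inj e" "\<And>j. e j < CARD('n)"
  shows "det (\<chi> i j. t i ^ e j :: real^'n^'n) \<noteq> 0"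
  unfolding det_nonzero_iff_ker_trivial
proof (intro allI impI)
  fix z :: "real^'n"
  assume ker: "(\<chi> i j. t i ^ e j) *v z = 0"
  define q where "q = (\<Sum>j\<in>UNIV. monom (z $ j) (e j))"
  have "poly q (t i) = ((\<chi> i j. t i ^ e j) *v z) $ i" for i
    by (simp add: q_def poly_sum poly_monom matrix_vector_mult_def mult.commute)
  then have "poly q (t i) = 0" for i
    using ker by simp
  moreover have "degree q < card (range t)"
  proof -
    have "degree (monom (z $ j) (e j)) \<le> CARD('n) - 1" for j
      using degree_monom_le[of "z $ j" "e j"] assms(3)[of j] by linarith
    then have "degree q \<le> CARD('n) - 1"
      unfolding q_def by (intro degree_sum_le) auto
    moreover have "CARD('n) > 0" by simp
    ultimately have "degree q < CARD('n)" by linarith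
    then show ?thesis by (simp add: card_image[OF assms(1)])
  qed
  ultimately have "q = 0" by (intro poly_eqI_degree[of "range t"]) auto
  have "coeff q (e j) = z $ j" for j
    unfolding q_def coeff_sum coeff_monom using assms(2) by (simp add: inj_eq)
  then show "z = 0" using \<open>q = 0\<close> by (simp add: vec_eq_iff)
qed

lemma ex_rows_in_general_position: "\<exists>A :: real^'n::finite^'m::finite. rows_in_general_position A"
proof -
  obtain e :: "'n \<Rightarrow> nat" where e: "bij_betw e UNIV {0..<CARD('n)}"
    using ex_bij_betw_finite_nat[of "UNIV :: 'n set"] by auto
  obtain h :: "'m \<Rightarrow> nat" where h: "bij_betw h UNIV {0..<CARD('m)}"
    using ex_bij_betw_finite_nat[of "UNIV :: 'm set"] by auto
  have "det (row_submatrix (\<chi> i j. real (h i) ^ e j) r) \<noteq> 0" if "inj r" for r :: "'n \<Rightarrow> 'm"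
  proof -
    have "inj (\<lambda>i. real (h (r i)))"
      using bij_betw_imp_inj_on[OF h] \<open>inj r\<close> by (simp add: inj_def)
    moreover have "inj e" "e j < CARD('n)" for j
      using e by (auto simp: bij_betw_def)
    ultimately show ?thesis
      using det_vandermonde_nonzero[of "\<lambda>i. real (h (r i))" e] by (simp add: row_submatrix_def)
  qed
  then show ?thesis unfolding rows_in_general_position_def by blast
qed

lemma matrix_vector_mult_uminus_right:
  fixes A :: "'a::ring_1^'n^'m"
  shows "A *v (- x) = - (A *v x)"
  using matrix_vector_mult_diff_distrib[of A 0 x] by simp

lemma sigma_in_range_iff:
  fixes A :: "real^'n::finite^'m::finite"
  assumes "rows_in_general_position A" "2 * CARD('n) \<le> CARD('m) + 1"
    and "u \<in> range ((*v) A)"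
  shows "sigma S u \<in> range ((*v) A) \<longleftrightarrow> sigma S u = u \<or> sigma S u = - u"
proof -
  obtain x where x: "u = A *v x" using assms(3) by auto
  have "sigma S u = u \<or> sigma S u = - u" if flipped: "sigma S u \<in> range ((*v) A)"
  proof -
    obtain y where y: "sigma S u = A *v y" using flipped by auto
    have "(A *v y) $ i = (if i \<in> S then - u $ i else u $ i)" for i
      using y[symmetric] by (simp add: sigma_def)
    then have on_S: "\<forall>i\<in>S. (A *v (x + y)) $ i = 0" and off_S: "\<forall>i\<in>-S. (A *v (x - y)) $ i = 0"
      using x by (simp_all add: matrix_vector_right_distrib matrix_vector_mult_diff_distrib)
    have "card S + card (-S) = CARD('m)"
      using card_Un_disjoint[of S "-S"] by (simp add: Un_commute)
    then consider "CARD('n) \<le> card S" | "CARD('n) \<le> card (-S)" using assms(2) by linarith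
    then show ?thesis
    proof cases
      case 1
      then have "y = - x"
        using rows_in_general_position_vanishing[OF assms(1) 1 on_S] by (simp add: add_eq_0_iff)
      then show ?thesis using x y by (simp add: matrix_vector_mult_uminus_right)
    next
      case 2
      then show ?thesis using rows_in_general_position_vanishing[OF assms(1) 2 off_S] x y by simp
    qed
  qed
  moreover have "- u = A *v (- x)"
    using x by (simp add: matrix_vector_mult_uminus_right)
  ultimately show ?thesis
    using assms(3) by auto
qed

theorem lemma2p3:
  assumes "CARD('m::finite) + 1 \<ge> 2 * CARD('n::finite)"
  shows "\<exists>P :: real^'n^'m \<Rightarrow> real. matrix_poly_fun P \<and> (\<exists>A0. P A0 \<noteq> 0) \<and>
     (\<forall>A. P A \<noteq> 0 \<longrightarrow> rank A = CARD('n) \<and>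
        (\<forall>(S :: 'm set) u. u \<in> range (\<lambda>x. A *v x) \<longrightarrow>
            (sigma S u \<in> range (\<lambda>x. A *v x) \<longleftrightarrow> sigma S u = u \<or> sigma S u = - u)))"
proof (intro exI[of _ maximal_minors_prod] conjI allI impI)
  show "matrix_poly_fun (maximal_minors_prod :: real^'n^'m \<Rightarrow> real)"
    by (rule matrix_poly_fun_maximal_minors_prod)
  show "\<exists>A0 :: real^'n^'m. maximal_minors_prod A0 \<noteq> 0"
    using ex_rows_in_general_position maximal_minors_prod_nonzero_iff by blast
  fix A :: "real^'n^'m" and S u
  assume "maximal_minors_prod A \<noteq> 0"
  then have A: "rows_in_general_position A" by (simp add: maximal_minors_prod_nonzero_iff)
  have "CARD('n) \<le> CARD('m)" using assms by linarith
  then show "rank A = CARD('n)" using rows_in_general_position_rank[OF A] by simp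
  assume "u \<in> range (\<lambda>x. A *v x)"
  then show "sigma S u \<in> range (\<lambda>x. A *v x) \<longleftrightarrow> sigma S u = u \<or> sigma S u = - u"
    using sigma_in_range_iff[OF A] assms by simp
qed

end
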